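(* Let $S$ be a $\mathcal{C}$-semigroup with $S\neq\mathcal{C}$ and genus $g$. Then $S$ is pseudo-symmetric if and only if $g=1+\# I_S(F(S))$ and $F(S)/2\in\mathbb{N}^p$.
   Context: An integer cone $\mathcal{C}\subseteq\mathbb{N}^p$ is the set of integer points of a finitely generated rational cone in $\mathbb{Q}_{\ge0}^p$. A $\mathcal{C}$-semigroup is a subset $S\subseteq\mathcal{C}$ containing $0$, closed under addition, with $\mathcal{C}\setminus S$ finite; $\mathcal{H}(S)=\mathcal{C}\setminus S$ and $g=\#\mathcal{H}(S)$. A monomial order $\preceq$ on $\mathbb{N}^p$ is fixed (total order, compatible with addition, $\mathbf 0\preceq\mathbf c$ for all $\mathbf c$), and $F(S)=\max_\preceq\mathcal{H}(S)$. $\mathrm{PF}(S)=\{\mathbf x\in\mathcal{H}(S)\mid \mathbf x+(S\setminus\{0\})\subseteq S\}$. $S$ is pseudo-symmetric if $\mathrm{PF}(S)=\{F(S),F(S)/2\}$. For $L\subseteq\mathbb{N}^p$, $\mathbf x\le_L\mathbf y$ means $\mathbf y-\mathbf x\in L$. For $\mathbf n\in\mathcal{C}$, $I_S(\mathbf n)=\{\mathbf s\in S\mid \mathbf s\le_{\mathcal{C}}\mathbf n\}$. *)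

theory Defs
  imports Complex_Main "HOL-Library.Function_Algebras"
begin

text \<open>Points of N^p are modelled as functions 'n \<Rightarrow> nat with 'n a finite index type
  (p = CARD('n)); addition and 0 are pointwise (Function_Algebras).\<close>

definition integer_cone :: "('n::finite \<Rightarrow> nat) set \<Rightarrow> bool" where
  "integer_cone C \<longleftrightarrow>
     (\<exists>G :: ('n \<Rightarrow> rat) set. finite G \<and> (\<forall>v\<in>G. \<forall>i. v i \<ge> 0) \<and>
        C = {x. \<exists>c :: ('n \<Rightarrow> rat) \<Rightarrow> rat. (\<forall>v\<in>G. c v \<ge> 0) \<and>
                   (\<forall>i. of_nat (x i) = (\<Sum>v\<in>G. c v * v i))})"

definition monomial_order :: "(('n \<Rightarrow> nat) \<Rightarrow> ('n \<Rightarrow> nat) \<Rightarrow> bool) \<Rightarrow> bool" where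
  "monomial_order le \<longleftrightarrow>
     (\<forall>x. le x x) \<and>
     (\<forall>x y. le x y \<and> le y x \<longrightarrow> x = y) \<and>
     (\<forall>x y z. le x y \<and> le y z \<longrightarrow> le x z) \<and>
     (\<forall>x y. le x y \<or> le y x) \<and>
     (\<forall>x y z. le x y \<longrightarrow> le (x + z) (y + z)) \<and>
     (\<forall>c. le 0 c)"

definition C_semigroup :: "('n::finite \<Rightarrow> nat) set \<Rightarrow> ('n \<Rightarrow> nat) set \<Rightarrow> bool" where
  "C_semigroup C S \<longleftrightarrow> integer_cone C \<and> S \<subseteq> C \<and> 0 \<in> S \<and>
     (\<forall>x\<in>S. \<forall>y\<in>S. x + y \<in> S) \<and> finite (C - S)"

definition gaps :: "('n \<Rightarrow> nat) set \<Rightarrow> ('n \<Rightarrow> nat) set \<Rightarrow> ('n \<Rightarrow> nat) set" where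
  "gaps C S = C - S"

definition genus :: "('n \<Rightarrow> nat) set \<Rightarrow> ('n \<Rightarrow> nat) set \<Rightarrow> nat" where
  "genus C S = card (gaps C S)"

definition frobenius ::
  "(('n \<Rightarrow> nat) \<Rightarrow> ('n \<Rightarrow> nat) \<Rightarrow> bool) \<Rightarrow> ('n \<Rightarrow> nat) set \<Rightarrow> ('n \<Rightarrow> nat) set \<Rightarrow> ('n \<Rightarrow> nat)" where
  "frobenius le C S = (THE f. f \<in> gaps C S \<and> (\<forall>h\<in>gaps C S. le h f))"

definition pseudo_frobenius ::
  "('n \<Rightarrow> nat) set \<Rightarrow> ('n \<Rightarrow> nat) set \<Rightarrow> ('n \<Rightarrow> nat) set" where
  "pseudo_frobenius C S = {x \<in> gaps C S. \<forall>s\<in>S - {0}. x + s \<in> S}"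

definition le_set :: "('n \<Rightarrow> nat) set \<Rightarrow> ('n \<Rightarrow> nat) \<Rightarrow> ('n \<Rightarrow> nat) \<Rightarrow> bool" where
  "le_set L x y \<longleftrightarrow> (\<exists>l\<in>L. y = x + l)"

definition I_S :: "('n \<Rightarrow> nat) set \<Rightarrow> ('n \<Rightarrow> nat) set \<Rightarrow> ('n \<Rightarrow> nat) \<Rightarrow> ('n \<Rightarrow> nat) set" where
  "I_S C S n = {s \<in> S. le_set C s n}"

text \<open>F(S)/2 \<in> N^p, i.e. every coordinate of F(S) is even; h is then F(S)/2.\<close>
definition is_half :: "('n \<Rightarrow> nat) \<Rightarrow> ('n \<Rightarrow> nat) \<Rightarrow> bool" where
  "is_half h f \<longleftrightarrow> (\<forall>i. f i = 2 * h i)"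

definition pseudo_symmetric ::
  "(('n \<Rightarrow> nat) \<Rightarrow> ('n \<Rightarrow> nat) \<Rightarrow> bool) \<Rightarrow> ('n \<Rightarrow> nat) set \<Rightarrow> ('n \<Rightarrow> nat) set \<Rightarrow> bool" where
  "pseudo_symmetric le C S \<longleftrightarrow>
     (\<exists>h. is_half h (frobenius le C S) \<and>
          pseudo_frobenius C S = {frobenius le C S, h})"

end

theory Submission
  imports Defs
begin

text \<open>Write \<open>H\<close> for the gaps, \<open>F\<close> for the Frobenius element and \<open>D = {x \<in> H. F - x \<in> S}\<close>.
  Subtraction \<open>s \<mapsto> F - s\<close> maps \<open>I_S(F)\<close> bijectively onto \<open>D\<close>, and if \<open>F = 2h\<close> then
  \<open>h\<close> is a gap outside \<open>D\<close>, so \<open>#I_S(F) \<le> g - 1\<close> with equality iff \<open>D = H - {h}\<close>.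
  Every gap lies below a pseudo-Frobenius element, so \<open>PF(S) = {F, h}\<close> forces
  \<open>D = H - {h}\<close>; conversely, if \<open>D = H - {h}\<close> then \<open>h\<close> is pseudo-Frobenius and any other
  pseudo-Frobenius element \<open>x \<noteq> F\<close> would give \<open>F = x + (F - x) \<in> S\<close>.\<close>

lemma monomial_orderD:
  assumes "monomial_order le"
  shows monomial_order_antisym: "le x y \<Longrightarrow> le y x \<Longrightarrow> x = y"
    and monomial_order_add_right: "le x y \<Longrightarrow> le (x + z) (y + z)"
    and monomial_order_zero_least: "le 0 x"
  using assms unfolding monomial_order_def by blast+

lemma monomial_order_linorder:
  assumes "monomial_order le"
  shows "class.linorder le (\<lambda>x y. le x y \<and> x \<noteq> y)"
  using assms unfolding monomial_order_def by unfold_locales blast+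

lemma monomial_order_le_add:
  assumes "monomial_order le"
  shows "le x (x + y)"
proof -
  have "le 0 y"
    by (rule monomial_order_zero_least[OF assms])
  then have "le (0 + x) (y + x)"
    by (rule monomial_order_add_right[OF assms])
  then show ?thesis
    by (simp add: add.commute)
qed

lemma monomial_order_finite_max:
  assumes "monomial_order le" "finite A" "A \<noteq> {}"
  obtains m where "m \<in> A" "\<And>x. x \<in> A \<Longrightarrow> le x m"
proof -
  interpret linorder le "\<lambda>x y. le x y \<and> x \<noteq> y"
    by (rule monomial_order_linorder[OF assms(1)])
  show thesis
    by (rule that[of "Max A"]) (use assms(2,3) in \<open>simp_all\<close>)
qed

lemma integer_cone_add:
  fixes C :: "('n::finite \<Rightarrow> nat) set"
  assumes "integer_cone C" "x \<in> C" "y \<in> C"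
  shows "x + y \<in> C"
proof -
  obtain G :: "('n \<Rightarrow> rat) set" where C: "C = {x. \<exists>c :: ('n \<Rightarrow> rat) \<Rightarrow> rat.
      (\<forall>v\<in>G. c v \<ge> 0) \<and> (\<forall>i. of_nat (x i) = (\<Sum>v\<in>G. c v * v i))}"
    using assms(1) unfolding integer_cone_def by blast
  obtain a where a: "\<forall>v\<in>G. a v \<ge> 0" "\<forall>i. of_nat (x i) = (\<Sum>v\<in>G. a v * v i)"
    using assms(2) C by blast
  obtain b where b: "\<forall>v\<in>G. b v \<ge> 0" "\<forall>i. of_nat (y i) = (\<Sum>v\<in>G. b v * v i)"
    using assms(3) C by blast
  have "\<forall>i. of_nat ((x + y) i) = (\<Sum>v\<in>G. (a v + b v) * v i)"
    using a(2) b(2) by (simp add: distrib_right sum.distrib)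
  then show ?thesis
    using a(1) b(1) C by (auto intro!: exI[of _ "\<lambda>v. a v + b v"])
qed

lemma integer_cone_half:
  fixes C :: "('n::finite \<Rightarrow> nat) set"
  assumes "integer_cone C" "h + h \<in> C"
  shows "h \<in> C"
proof -
  obtain G :: "('n \<Rightarrow> rat) set" where C: "C = {x. \<exists>c :: ('n \<Rightarrow> rat) \<Rightarrow> rat.
      (\<forall>v\<in>G. c v \<ge> 0) \<and> (\<forall>i. of_nat (x i) = (\<Sum>v\<in>G. c v * v i))}"
    using assms(1) unfolding integer_cone_def by blast
  obtain a where a: "\<forall>v\<in>G. a v \<ge> 0" "\<forall>i. of_nat ((h + h) i) = (\<Sum>v\<in>G. a v * v i)"
    using assms(2) C by blast
  have "\<forall>i. of_nat (h i) = (\<Sum>v\<in>G. a v / 2 * v i)"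
    using a(2) by (simp add: sum_divide_distrib[symmetric] mult.commute)
  then show ?thesis
    using a(1) C by (auto intro!: exI[of _ "\<lambda>v. a v / 2"])
qed

lemma C_semigroupD:
  assumes "C_semigroup C S"
  shows C_semigroup_integer_cone: "integer_cone C"
    and C_semigroup_subset: "S \<subseteq> C"
    and C_semigroup_zero: "0 \<in> S"
    and C_semigroup_add: "x \<in> S \<Longrightarrow> y \<in> S \<Longrightarrow> x + y \<in> S"
    and C_semigroup_finite_gaps: "finite (gaps C S)"
  using assms unfolding C_semigroup_def gaps_def by blast+

lemma gap_add_in_cone:
  assumes "C_semigroup C S" "x \<in> gaps C S" "s \<in> S"
  shows "x + s \<in> C"
  using assms integer_cone_add C_semigroupD[OF assms(1)] unfolding gaps_def by blast

lemma card_I_S_gap: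
  assumes S: "C_semigroup C S" and n: "n \<in> gaps C S"
  shows "card (I_S C S n) = card {x \<in> gaps C S. le_set S x n}"
proof (rule bij_betw_same_card[OF bij_betw_byWitness[where f' = "\<lambda>x. n - x"]])
  have "n - s \<in> gaps C S \<and> le_set S (n - s) n \<and> n - (n - s) = s" if s: "s \<in> I_S C S n" for s
  proof -
    obtain l where "s \<in> S" "l \<in> C" "n = s + l"
      using s unfolding I_S_def le_set_def by blast
    moreover have "l \<notin> S"
      using n \<open>s \<in> S\<close> \<open>n = s + l\<close> C_semigroup_add[OF S] unfolding gaps_def by blast
    ultimately show ?thesis
      unfolding gaps_def le_set_def by (auto simp: add.commute)
  qed
  then show "\<forall>s\<in>I_S C S n. n - (n - s) = s"
    "(\<lambda>s. n - s) ` I_S C S n \<subseteq> {x \<in> gaps C S. le_set S x n}"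
    by auto
  have "n - x \<in> I_S C S n \<and> n - (n - x) = x" if "x \<in> gaps C S" "le_set S x n" for x
    using that unfolding I_S_def le_set_def gaps_def by (auto simp: add.commute)
  then show "\<forall>x\<in>{x \<in> gaps C S. le_set S x n}. n - (n - x) = x"
    "(\<lambda>x. n - x) ` {x \<in> gaps C S. le_set S x n} \<subseteq> I_S C S n"
    by auto
qed

lemma is_half_iff: "is_half h f \<longleftrightarrow> f = h + h"
  unfolding is_half_def by (auto simp: fun_eq_iff mult_2)

locale monomially_ordered_C_semigroup =
  fixes le :: "('n::finite \<Rightarrow> nat) \<Rightarrow> ('n \<Rightarrow> nat) \<Rightarrow> bool"
    and C S :: "('n \<Rightarrow> nat) set"
  assumes order: "monomial_order le"
    and semigroup: "C_semigroup C S"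
    and proper: "S \<noteq> C"
begin

lemma frobenius_in_gaps: "frobenius le C S \<in> gaps C S"
  and gap_le_frobenius: "x \<in> gaps C S \<Longrightarrow> le x (frobenius le C S)"
proof -
  have "gaps C S \<noteq> {}"
    using proper C_semigroup_subset[OF semigroup] unfolding gaps_def by blast
  then obtain m where m: "m \<in> gaps C S" "\<And>x. x \<in> gaps C S \<Longrightarrow> le x m"
    using monomial_order_finite_max[OF order C_semigroup_finite_gaps[OF semigroup]] by blast
  have "frobenius le C S = m"
    unfolding frobenius_def
    by (rule the_equality) (use m monomial_order_antisym[OF order] in blast)+
  then show "frobenius le C S \<in> gaps C S" "x \<in> gaps C S \<Longrightarrow> le x (frobenius le C S)"
    using m by simp_all
qed

lemma pseudo_frobenius_if_maximal:
  assumes m: "m \<in> gaps C S"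
    and maximal: "\<And>s. s \<in> S - {0} \<Longrightarrow> m + s \<in> gaps C S \<Longrightarrow> le (m + s) m"
  shows "m \<in> pseudo_frobenius C S"
  unfolding pseudo_frobenius_def
proof (intro CollectI conjI m ballI)
  fix s assume s: "s \<in> S - {0}"
  show "m + s \<in> S"
  proof (rule ccontr)
    assume "m + s \<notin> S"
    then have "m + s \<in> gaps C S"
      using gap_add_in_cone[OF semigroup m] s unfolding gaps_def by blast
    then have "m + s = m"
      using maximal s monomial_order_antisym[OF order] monomial_order_le_add[OF order] by blast
    then show False
      using s by simp
  qed
qed

lemma frobenius_in_pseudo_frobenius: "frobenius le C S \<in> pseudo_frobenius C S"
  using pseudo_frobenius_if_maximal frobenius_in_gaps gap_le_frobenius by blast

lemma gap_le_set_pseudo_frobenius: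
  assumes x: "x \<in> gaps C S"
  obtains y where "y \<in> pseudo_frobenius C S" "le_set S x y"
proof -
  define A where "A = {y \<in> gaps C S. le_set S x y}"
  have "x \<in> A"
    using x C_semigroup_zero[OF semigroup] unfolding A_def le_set_def by force
  moreover have "finite A"
    using C_semigroup_finite_gaps[OF semigroup] unfolding A_def by simp
  ultimately obtain m where m: "m \<in> A" "\<And>y. y \<in> A \<Longrightarrow> le y m"
    using monomial_order_finite_max[OF order] by blast
  have "m \<in> pseudo_frobenius C S"
  proof (rule pseudo_frobenius_if_maximal)
    show "m \<in> gaps C S"
      using m(1) unfolding A_def by blast
    fix s assume "s \<in> S - {0}" "m + s \<in> gaps C S"
    moreover obtain t where "t \<in> S" "m = x + t"
      using m(1) unfolding A_def le_set_def by blast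
    ultimately have "m + s \<in> A"
      unfolding A_def le_set_def
      by (auto intro!: bexI[of _ "t + s"] C_semigroup_add[OF semigroup] simp: add.assoc)
    then show "le (m + s) m"
      by (rule m(2))
  qed
  then show thesis
    using that m(1) unfolding A_def by blast
qed

context
  fixes h
  assumes half: "frobenius le C S = h + h"
begin

lemma half_frobenius_in_gaps: "h \<in> gaps C S"
proof -
  have "h + h \<in> C" "h + h \<notin> S"
    using frobenius_in_gaps half unfolding gaps_def by auto
  then have "h \<in> C" "h \<notin> S"
    using integer_cone_half[OF C_semigroup_integer_cone[OF semigroup]]
      C_semigroup_add[OF semigroup] by blast+
  then show ?thesis
    unfolding gaps_def by blast
qed

lemma gaps_le_set_frobenius_subset:
  "{x \<in> gaps C S. le_set S x (frobenius le C S)} \<subseteq> gaps C S - {h}"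
proof -
  have "\<not> le_set S h (frobenius le C S)"
    using half_frobenius_in_gaps half unfolding le_set_def gaps_def by simp
  then show ?thesis
    by blast
qed

lemma gaps_le_set_frobenius_if_pseudo_frobenius_eq:
  assumes PF: "pseudo_frobenius C S = {frobenius le C S, h}"
  shows "{x \<in> gaps C S. le_set S x (frobenius le C S)} = gaps C S - {h}"
proof (rule subset_antisym[OF gaps_le_set_frobenius_subset], rule subsetI)
  fix x assume x: "x \<in> gaps C S - {h}"
  then obtain y t where y: "y \<in> {frobenius le C S, h}" and t: "t \<in> S" "y = x + t"
    using gap_le_set_pseudo_frobenius PF unfolding le_set_def by (metis DiffE)
  have "le_set S x (frobenius le C S)"
  proof (cases "y = h")
    case True
    \<comment> \<open>\<open>t \<noteq> 0\<close> because \<open>x \<noteq> h\<close>, so \<open>h + t \<in> S\<close>, and \<open>F = x + (h + t)\<close>\<close>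
    have "h + t \<in> S"
      using PF x t True unfolding pseudo_frobenius_def by auto
    moreover have "frobenius le C S = x + (h + t)"
      using half t True by (simp add: ac_simps)
    ultimately show ?thesis
      unfolding le_set_def by blast
  next
    case False
    then show ?thesis
      using y t unfolding le_set_def by (auto intro!: bexI[of _ t])
  qed
  then show "x \<in> {x \<in> gaps C S. le_set S x (frobenius le C S)}"
    using x by blast
qed

lemma pseudo_frobenius_eq_if_gaps_le_set_frobenius:
  assumes D: "{x \<in> gaps C S. le_set S x (frobenius le C S)} = gaps C S - {h}"
  shows "pseudo_frobenius C S = {frobenius le C S, h}"
proof -
  have dual: "\<exists>t\<in>S. frobenius le C S = x + t" if "x \<in> gaps C S" "x \<noteq> h" for x
    using that D unfolding le_set_def by blast
  have "h \<in> pseudo_frobenius C S"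
    unfolding pseudo_frobenius_def
  proof (intro CollectI conjI half_frobenius_in_gaps ballI)
    fix s assume s: "s \<in> S - {0}"
    show "h + s \<in> S"
    proof (rule ccontr)
      assume "h + s \<notin> S"
      then have "h + s \<in> gaps C S"
        using gap_add_in_cone[OF semigroup half_frobenius_in_gaps] s unfolding gaps_def by blast
      moreover have "h + s \<noteq> h"
        using s by simp
      ultimately obtain t where "t \<in> S" "h + h = h + s + t"
        using dual half by metis
      then have "h \<in> S"
        using s C_semigroup_add[OF semigroup] by (simp add: add.assoc)
      then show False
        using half_frobenius_in_gaps unfolding gaps_def by blast
    qed
  qed
  moreover have "x \<in> {frobenius le C S, h}" if x: "x \<in> pseudo_frobenius C S" for x
  proof (rule ccontr)
    assume "x \<notin> {frobenius le C S, h}"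
    moreover have "x \<in> gaps C S"
      using x unfolding pseudo_frobenius_def by blast
    ultimately obtain t where "t \<in> S" "t \<noteq> 0" "frobenius le C S = x + t"
      using dual by fastforce
    moreover have "x + t \<in> S"
      using x \<open>t \<in> S\<close> \<open>t \<noteq> 0\<close> unfolding pseudo_frobenius_def by blast
    ultimately have "frobenius le C S \<in> S"
      by simp
    then show False
      using frobenius_in_gaps unfolding gaps_def by blast
  qed
  ultimately show ?thesis
    using frobenius_in_pseudo_frobenius by (intro equalityI subsetI) auto
qed

lemma pseudo_frobenius_eq_iff_genus:
  "pseudo_frobenius C S = {frobenius le C S, h} \<longleftrightarrow>
     genus C S = 1 + card (I_S C S (frobenius le C S))"
proof -
  let ?D = "{x \<in> gaps C S. le_set S x (frobenius le C S)}"
  have fin: "finite (gaps C S - {h})"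
    using C_semigroup_finite_gaps[OF semigroup] by blast
  have "pseudo_frobenius C S = {frobenius le C S, h} \<longleftrightarrow> ?D = gaps C S - {h}"
    by (rule iffI)
      (erule gaps_le_set_frobenius_if_pseudo_frobenius_eq,
       erule pseudo_frobenius_eq_if_gaps_le_set_frobenius)
  also have "\<dots> \<longleftrightarrow> card ?D = card (gaps C S - {h})"
    by (rule iffI) (simp, erule card_subset_eq[OF fin gaps_le_set_frobenius_subset])
  also have "\<dots> \<longleftrightarrow> genus C S = 1 + card ?D"
    using card_Suc_Diff1[OF C_semigroup_finite_gaps[OF semigroup] half_frobenius_in_gaps]
    unfolding genus_def by linarith
  also have "card ?D = card (I_S C S (frobenius le C S))"
    by (rule card_I_S_gap[OF semigroup frobenius_in_gaps, symmetric])
  finally show ?thesis .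
qed

end

end

theorem mainTheorem3:
  fixes le :: "('n::finite \<Rightarrow> nat) \<Rightarrow> ('n \<Rightarrow> nat) \<Rightarrow> bool"
    and C S :: "('n \<Rightarrow> nat) set"
  assumes "monomial_order le"
    and "C_semigroup C S"
    and "S \<noteq> C"
  shows "pseudo_symmetric le C S \<longleftrightarrow>
           genus C S = 1 + card (I_S C S (frobenius le C S)) \<and>
           (\<exists>h. is_half h (frobenius le C S))"
proof -
  interpret monomially_ordered_C_semigroup le C S
    using assms by unfold_locales
  show ?thesis
    unfolding pseudo_symmetric_def is_half_iff
    by (meson pseudo_frobenius_eq_iff_genus)
qed

end
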